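(* Let $\Xi$ be a system. If $\Xi$ has a patchwork solution, then $\Xi$ is solvable.
   Context: A system $\Xi$ is a bipartite graph (undirected, simple) whose vertices are coloured "pairs" and "triples", together with a set of links $\lambda=(\tau,S)$, where $\tau$ is a triple (the tip) and $S$ is a set of pairs adjacent to $\tau$ (the base vertices; the edges $\{\tau,\pi\}$, $\pi\in S$, are the legs of $\lambda$), and a weight $\mu_\lambda\in\mathbb C^\times$ for each link. The support of $\lambda$ is the subgraph with vertices $S\cup\{\tau\}$ and edges $\{\tau,\pi\}$, $\pi\in S$. A subsystem is a subgraph together with a subset of the links whose support lies in the subgraph (same weights); it is full if it contains all edges of $\Xi$ between its vertices and all links of $\Xi$ supported in it. An edge $\{\tau,\pi\}$ is simply linked if $(\tau,\{\pi\})$ is a link and the edge is a leg of no other link. A solution of a system is an orientation of all its edges such that (S1) every triple has exactly one edge oriented away from it, and that edge is simply linked; (S2) every pair has at most one edge oriented towards it; (S3) there is no oriented cycle. A system is solvable if it has a solution. A patch of $\Xi$ is a full subsystem $\Xi'$ that contains the base vertices of every link of $\Xi$ having a leg in $\Xi'$. A patchwork for $\Xi$ is a family $\{\Xi_k\}_{k\in I}$ of patches indexed by a partially ordered set $I$ such that (P1) every vertex of $\Xi$ lies in some $\Xi_k$; (P2) for $k\ne l$, $\Xi_k$ and $\Xi_l$ have no triple in common; (P3) if $\tau$ is a triple in $\Xi_l$ and $\{\tau,\pi\}$ is an edge of $\Xi$, then $\pi$ is a pair of $\Xi_k$ for some $k\le l$. A patchwork solution is a patchwork together with a solution of each patch $\Xi_k$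 such that (PS) if $\pi$ is a pair in $\Xi_k\cap\Xi_l$ and some edge $\{\tau,\pi\}$ of $\Xi_k$ is oriented towards $\pi$, then $k\le l$. *)

theory Defs
  imports Complex_Main
begin

text \<open>An (undirected) edge between a triple t and a
pair p is represented canonically by the ordered tuple (t, p), triple first.
A link is a tuple (tip, set of base vertices).\<close>

record 'v system =
  pairs   :: "'v set"
  triples :: "'v set"
  edges   :: "('v \<times> 'v) set"
  links   :: "('v \<times> 'v set) set"
  weight  :: "('v \<times> 'v set) \<Rightarrow> complex"

definition wf_system :: "'v system \<Rightarrow> bool" where
  "wf_system X \<longleftrightarrow>
     pairs X \<inter> triples X = {} \<and>
     finite (pairs X \<union> triples X) \<and>
     edges X \<subseteq> triples X \<times> pairs X \<and>
     (\<forall>(t, S) \<in> links X. t \<in> triples X \<and> (\<forall>p\<in>S. (t, p) \<in> edges X)) \<and>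
     (\<forall>l \<in> links X. weight X l \<noteq> 0)"

definition legs :: "'v \<times> 'v set \<Rightarrow> ('v \<times> 'v) set" where
  "legs l = {(fst l, p) | p. p \<in> snd l}"

definition simply_linked :: "'v system \<Rightarrow> 'v \<times> 'v \<Rightarrow> bool" where
  "simply_linked X e \<longleftrightarrow>
     (fst e, {snd e}) \<in> links X \<and>
     (\<forall>l \<in> links X. e \<in> legs l \<longrightarrow> l = (fst e, {snd e}))"

text \<open>An orientation of the edges is given by the set D of edges oriented away from
their triple (i.e. from t towards p); all other edges are oriented from p to t.\<close>
definition orient_rel :: "'v system \<Rightarrow> ('v \<times> 'v) set \<Rightarrow> ('v \<times> 'v) set" where
  "orient_rel X D = D \<union> {(p, t) | t p. (t, p) \<in> edges X - D}"

definition solution :: "'v system \<Rightarrow> ('v \<times> 'v) set \<Rightarrow> bool" where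
  "solution X D \<longleftrightarrow>
     D \<subseteq> edges X \<and>
     (\<forall>t \<in> triples X. \<exists>!p. (t, p) \<in> D) \<and>
     (\<forall>e \<in> D. simply_linked X e) \<and>
     (\<forall>p \<in> pairs X. \<forall>t1 t2. (t1, p) \<in> D \<longrightarrow> (t2, p) \<in> D \<longrightarrow> t1 = t2) \<and>
     acyclic (orient_rel X D)"

definition solvable :: "'v system \<Rightarrow> bool" where
  "solvable X \<longleftrightarrow> (\<exists>D. solution X D)"

definition supported_in :: "'v system \<Rightarrow> 'v \<times> 'v set \<Rightarrow> bool" where
  "supported_in Y l \<longleftrightarrow> fst l \<in> triples Y \<and> snd l \<subseteq> pairs Y \<and> legs l \<subseteq> edges Y"

definition subsystem :: "'v system \<Rightarrow> 'v system \<Rightarrow> bool" where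
  "subsystem Y X \<longleftrightarrow>
     pairs Y \<subseteq> pairs X \<and> triples Y \<subseteq> triples X \<and>
     edges Y \<subseteq> edges X \<and> edges Y \<subseteq> triples Y \<times> pairs Y \<and>
     links Y \<subseteq> links X \<and> (\<forall>l \<in> links Y. supported_in Y l) \<and>
     (\<forall>l \<in> links Y. weight Y l = weight X l)"

definition full_subsystem :: "'v system \<Rightarrow> 'v system \<Rightarrow> bool" where
  "full_subsystem Y X \<longleftrightarrow>
     subsystem Y X \<and>
     edges Y = edges X \<inter> (triples Y \<times> pairs Y) \<and>
     links Y = {l \<in> links X. supported_in Y l}"

definition patch :: "'v system \<Rightarrow> 'v system \<Rightarrow> bool" where
  "patch X Y \<longleftrightarrow>
     full_subsystem Y X \<and>
     (\<forall>l \<in> links X. legs l \<inter> edges Y \<noteq> {} \<longrightarrow> snd l \<subseteq> pairs Y)"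

definition patchwork :: "'v system \<Rightarrow> 'i::order set \<Rightarrow> ('i \<Rightarrow> 'v system) \<Rightarrow> bool" where
  "patchwork X I \<Xi> \<longleftrightarrow>
     (\<forall>k \<in> I. patch X (\<Xi> k)) \<and>
     (pairs X \<union> triples X \<subseteq> (\<Union>k \<in> I. pairs (\<Xi> k) \<union> triples (\<Xi> k))) \<and>
     (\<forall>k \<in> I. \<forall>l \<in> I. k \<noteq> l \<longrightarrow> triples (\<Xi> k) \<inter> triples (\<Xi> l) = {}) \<and>
     (\<forall>l \<in> I. \<forall>t \<in> triples (\<Xi> l). \<forall>p. (t, p) \<in> edges X \<longrightarrow>
        (\<exists>k \<in> I. k \<le> l \<and> p \<in> pairs (\<Xi> k)))"

definition patchwork_solution ::
  "'v system \<Rightarrow> 'i::order set \<Rightarrow> ('i \<Rightarrow> 'v system) \<Rightarrow> ('i \<Rightarrow> ('v \<times> 'v) set) \<Rightarrow> bool" where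
  "patchwork_solution X I \<Xi> D \<longleftrightarrow>
     patchwork X I \<Xi> \<and>
     (\<forall>k \<in> I. solution (\<Xi> k) (D k)) \<and>
     (\<forall>k \<in> I. \<forall>l \<in> I. \<forall>p \<in> pairs (\<Xi> k) \<inter> pairs (\<Xi> l).
        (\<exists>t. (t, p) \<in> edges (\<Xi> k) \<and> (t, p) \<in> D k) \<longrightarrow> k \<le> l)"

end

theory Submission
  imports Defs
begin

text \<open>The union of the orientations of the patches is a solution of the system. (S1) is local:
every triple lies in exactly one patch, and since a patch is full and contains the base of every
link touching it, an edge simply linked in a patch is simply linked in the system. For (S2), edges
oriented towards the same pair in patches \<open>k\<close> and \<open>l\<close> give \<open>k \<le> l\<close> and \<open>l \<le> k\<close> by (PS).
For (S3), give every triple the index of its patch and every pair the index of the patch whose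
orientation points into it; by (P3) and (PS) this level never decreases along an oriented edge,
so an oriented cycle stays within one patch and contradicts the acyclicity of its solution.\<close>

lemma acyclic_if_level_mono:
  fixes level :: "'a \<Rightarrow> 'i::order"
  assumes range: "Range R \<subseteq> A"
    and mono: "\<And>a b. (a, b) \<in> R \<Longrightarrow> a \<in> A \<Longrightarrow> level a \<le> level b"
    and flat: "\<And>a b. (a, b) \<in> R \<Longrightarrow> a \<in> A \<Longrightarrow> level a = level b \<Longrightarrow> (a, b) \<in> S (level a)"
    and acyclic_S: "\<And>a. a \<in> A \<Longrightarrow> acyclic (S (level a))"
  shows "acyclic R"
  unfolding acyclic_def
proof (intro allI notI)
  fix x assume cycle: "(x, x) \<in> R\<^sup>+"
  have reach: "b \<in> A \<and> level a \<le> level b" if "(a, b) \<in> R\<^sup>*" "a \<in> A" for a b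
    using that(1)
  proof (induction rule: rtrancl_induct)
    case base
    then show ?case using that(2) by simp
  next
    case (step y z)
    then have "z \<in> A" "level y \<le> level z"
      using range mono[of y z] by blast+
    with step.IH show ?case by (blast intro: order_trans)
  qed
  have "x \<in> A"
    using cycle range by (metis Range.intros subsetD tranclE)
  have on_cycle: "v \<in> A \<and> level v = level x" if "(x, v) \<in> R\<^sup>*" "(v, x) \<in> R\<^sup>*" for v
    using reach[OF that(1) \<open>x \<in> A\<close>] reach[OF that(2)] by (blast intro: order_antisym)
  have "(x, v) \<in> (S (level x))\<^sup>+" if "(x, v) \<in> R\<^sup>+" "(v, x) \<in> R\<^sup>*" for v
    using that
  proof (induction rule: trancl_induct)
    case (base v)
    then have "level x = level v"
      using on_cycle[OF r_into_rtrancl] by simp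
    then show ?case
      using flat[OF base(1) \<open>x \<in> A\<close>] by blast
  next
    case (step y z)
    have "(y, x) \<in> R\<^sup>*"
      using step(2,4) by (rule converse_rtrancl_into_rtrancl)
    then have "y \<in> A" "level y = level x" "level z = level x"
      using on_cycle step(1,2,4) by (blast intro: trancl_into_rtrancl rtrancl_into_rtrancl)+
    then have "(y, z) \<in> S (level x)"
      using flat[OF step(2)] by simp
    then show ?case using step.IH \<open>(y, x) \<in> R\<^sup>*\<close> by (blast intro: trancl_into_trancl)
  qed
  with cycle have "(x, x) \<in> (S (level x))\<^sup>+" by blast
  with acyclic_S[OF \<open>x \<in> A\<close>] show False unfolding acyclic_def by blast
qed

lemma wf_system_edgeD:
  assumes "wf_system X" "(t, p) \<in> edges X"
  shows "t \<in> triples X" "p \<in> pairs X" "t \<notin> pairs X" "p \<notin> triples X"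
  using assms unfolding wf_system_def by auto

lemma wf_system_legs_subset:
  assumes "wf_system X" "l \<in> links X"
  shows "legs l \<subseteq> edges X"
  using assms unfolding wf_system_def legs_def by auto

lemma patch_simply_linked:
  assumes "wf_system X" "patch X Y" "e \<in> edges Y" "simply_linked Y e"
  shows "simply_linked X e"
proof -
  obtain t p where e: "e = (t, p)" by fastforce
  have full: "full_subsystem Y X"
    using assms(2) unfolding patch_def by blast
  have "(t, {p}) \<in> links X"
    using assms(4) full unfolding e simply_linked_def full_subsystem_def by auto
  moreover have "l = (t, {p})" if l: "l \<in> links X" "(t, p) \<in> legs l" for l
  proof -
    have "snd l \<subseteq> pairs Y"
      using assms(2,3) l unfolding patch_def e by blast
    moreover have "fst l = t"
      using l(2) unfolding legs_def by auto
    moreover have "t \<in> triples Y"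
      using assms(3) full unfolding e full_subsystem_def by blast
    ultimately have "legs l \<subseteq> edges Y"
      using wf_system_legs_subset[OF assms(1) l(1)] full
      unfolding full_subsystem_def legs_def by blast
    with \<open>snd l \<subseteq> pairs Y\<close> \<open>fst l = t\<close> \<open>t \<in> triples Y\<close> have "l \<in> links Y"
      using full l(1) unfolding full_subsystem_def supported_in_def by auto
    then show ?thesis
      using assms(4) l(2) unfolding e simply_linked_def by auto
  qed
  ultimately show ?thesis
    unfolding e simply_linked_def by auto
qed

lemma orient_rel_full_subsystem:
  assumes "wf_system X" "full_subsystem Y X" "(a, b) \<in> orient_rel X D'"
    and "a \<in> pairs Y \<union> triples Y" "b \<in> pairs Y \<union> triples Y"
    and "D' \<subseteq> edges X"
  shows "(a, b) \<in> orient_rel Y (D' \<inter> edges Y)"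
proof -
  have sub: "pairs Y \<subseteq> pairs X" "triples Y \<subseteq> triples X"
    and edges_Y: "edges Y = edges X \<inter> (triples Y \<times> pairs Y)"
    using assms(2) unfolding full_subsystem_def subsystem_def by auto
  have edge_Y: "(t, p) \<in> edges Y"
    if "(t, p) \<in> edges X" "t \<in> pairs Y \<union> triples Y" "p \<in> pairs Y \<union> triples Y" for t p
    using that wf_system_edgeD[OF assms(1) that(1)] sub edges_Y by blast
  from assms(3) consider "(a, b) \<in> D'" | "(b, a) \<in> edges X" "(b, a) \<notin> D'"
    unfolding orient_rel_def by blast
  then show ?thesis
  proof cases
    case 1
    then show ?thesis
      using edge_Y assms(4-6) unfolding orient_rel_def by blast
  next
    case 2
    then show ?thesis
      using edge_Y assms(4,5) unfolding orient_rel_def by blast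
  qed
qed

locale patchwork_solved =
  fixes X :: "'v system" and I :: "'i::order set"
    and \<Xi> :: "'i \<Rightarrow> 'v system" and D :: "'i \<Rightarrow> ('v \<times> 'v) set"
  assumes wf: "wf_system X"
    and patchwork_solution: "patchwork_solution X I \<Xi> D"
begin

lemma patchwork: "patchwork X I \<Xi>"
  using patchwork_solution unfolding patchwork_solution_def by blast

lemma patch: "k \<in> I \<Longrightarrow> patch X (\<Xi> k)"
  using patchwork unfolding patchwork_def by blast

lemma covers: "pairs X \<union> triples X \<subseteq> (\<Union>k \<in> I. pairs (\<Xi> k) \<union> triples (\<Xi> k))"
  using patchwork unfolding patchwork_def by blast

lemma triples_disjoint:
  "k \<in> I \<Longrightarrow> l \<in> I \<Longrightarrow> t \<in> triples (\<Xi> k) \<Longrightarrow> t \<in> triples (\<Xi> l) \<Longrightarrow> k = l"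
  using patchwork unfolding patchwork_def by blast

lemma edge_to_earlier_pair:
  "l \<in> I \<Longrightarrow> t \<in> triples (\<Xi> l) \<Longrightarrow> (t, p) \<in> edges X \<Longrightarrow> \<exists>k \<in> I. k \<le> l \<and> p \<in> pairs (\<Xi> k)"
  using patchwork unfolding patchwork_def by blast

lemma solution: "k \<in> I \<Longrightarrow> solution (\<Xi> k) (D k)"
  using patchwork_solution unfolding patchwork_solution_def by blast

lemma full: "k \<in> I \<Longrightarrow> full_subsystem (\<Xi> k) X"
  using patch unfolding patch_def by blast

lemma oriented_edgeD:
  assumes "k \<in> I" "(t, p) \<in> D k"
  shows "(t, p) \<in> edges (\<Xi> k)" "(t, p) \<in> edges X" "t \<in> triples (\<Xi> k)" "p \<in> pairs (\<Xi> k)"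
proof -
  show "(t, p) \<in> edges (\<Xi> k)"
    using assms solution[OF assms(1)] unfolding solution_def by blast
  with full[OF assms(1)] show "(t, p) \<in> edges X" "t \<in> triples (\<Xi> k)" "p \<in> pairs (\<Xi> k)"
    unfolding full_subsystem_def by blast+
qed

lemma oriented_pair_le:
  assumes "k \<in> I" "l \<in> I" "p \<in> pairs (\<Xi> l)" "(t, p) \<in> D k"
  shows "k \<le> l"
proof -
  have "p \<in> pairs (\<Xi> k)" "(t, p) \<in> edges (\<Xi> k)"
    using oriented_edgeD[OF assms(1,4)] by blast+
  then show ?thesis
    using patchwork_solution assms unfolding patchwork_solution_def by blast
qed

lemma oriented_pair_unique:
  assumes "k \<in> I" "l \<in> I" "(t, p) \<in> D k" "(t', p) \<in> D l"
  shows "k = l"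
  using oriented_pair_le[OF assms(1,2) _ assms(3)] oriented_pair_le[OF assms(2,1) _ assms(4)]
    oriented_edgeD assms by (meson order_antisym)

lemma triple_in_patch:
  assumes "t \<in> triples X"
  obtains k where "k \<in> I" "t \<in> triples (\<Xi> k)"
proof -
  have "t \<notin> pairs (\<Xi> k)" if "k \<in> I" for k
    using assms wf full[OF that] unfolding wf_system_def full_subsystem_def subsystem_def by blast
  with assms covers that show ?thesis by blast
qed

definition merged :: "('v \<times> 'v) set" where
  "merged = (\<Union>k \<in> I. D k)"

lemma merged_subset_edges: "merged \<subseteq> edges X"
  unfolding merged_def by (intro UN_least subrelI) (blast dest: oriented_edgeD(2))

lemma merged_inter_edges:
  assumes "k \<in> I"
  shows "merged \<inter> edges (\<Xi> k) = D k"
proof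
  show "merged \<inter> edges (\<Xi> k) \<subseteq> D k"
  proof clarify
    fix t p assume "(t, p) \<in> merged" "(t, p) \<in> edges (\<Xi> k)"
    then obtain j where j: "j \<in> I" "(t, p) \<in> D j"
      unfolding merged_def by blast
    have "t \<in> triples (\<Xi> k)"
      using \<open>(t, p) \<in> edges (\<Xi> k)\<close> full[OF assms] unfolding full_subsystem_def by blast
    then have "j = k"
      using triples_disjoint[OF j(1) assms] oriented_edgeD(3)[OF j] by blast
    with j show "(t, p) \<in> D k" by simp
  qed
  show "D k \<subseteq> merged \<inter> edges (\<Xi> k)"
    using assms oriented_edgeD(1) unfolding merged_def by auto
qed

text \<open>\<open>level\<close> is junk on pairs into which no patch orients an edge; these are sources of
\<open>orient_rel X merged\<close>, so they lie on no cycle.\<close>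

definition at_level :: "'v \<Rightarrow> 'i \<Rightarrow> bool" where
  "at_level v k \<longleftrightarrow> k \<in> I \<and> (v \<in> triples (\<Xi> k) \<or> (\<exists>t. (t, v) \<in> D k))"

definition level :: "'v \<Rightarrow> 'i" where
  "level v = (THE k. at_level v k)"

lemma at_level_vertex:
  "at_level v k \<Longrightarrow> v \<in> pairs (\<Xi> k) \<union> triples (\<Xi> k)"
  unfolding at_level_def using oriented_edgeD by blast

lemma at_level_unique:
  assumes "at_level v k" "at_level v l"
  shows "k = l"
proof -
  have not_both: False if "j \<in> I" "v \<in> triples (\<Xi> j)" "j' \<in> I" "(t, v) \<in> D j'" for j j' t
  proof -
    have "v \<in> pairs X"
      using wf_system_edgeD(2)[OF wf oriented_edgeD(2)[OF that(3,4)]] .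
    moreover have "v \<in> triples X"
      using that(1,2) full unfolding full_subsystem_def subsystem_def by blast
    ultimately show False
      using wf unfolding wf_system_def by blast
  qed
  from assms show ?thesis
    unfolding at_level_def
    by (elim conjE disjE exE; blast intro: triples_disjoint oriented_pair_unique dest: not_both)
qed

lemma level_eq: "at_level v k \<Longrightarrow> level v = k"
  unfolding level_def using at_level_unique by blast

lemma merged_level_mono:
  assumes "(a, b) \<in> orient_rel X merged" "at_level a k"
  shows "at_level b (level b) \<and> k \<le> level b"
proof -
  from assms(1) consider (forward) j where "j \<in> I" "(a, b) \<in> D j"
    | (backward) "(b, a) \<in> edges X" "(b, a) \<notin> merged"
    unfolding orient_rel_def merged_def by blast
  then show ?thesis
  proof cases
    case forward
    then have "at_level a j" "at_level b j"
      unfolding at_level_def using oriented_edgeD by blast+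
    then show ?thesis using assms(2) at_level_unique level_eq by blast
  next
    case backward
    obtain l where l: "l \<in> I" "b \<in> triples (\<Xi> l)"
      using triple_in_patch wf_system_edgeD(1)[OF wf backward(1)] by blast
    then obtain k' where k': "k' \<in> I" "k' \<le> l" "a \<in> pairs (\<Xi> k')"
      using edge_to_earlier_pair backward(1) by blast
    have "a \<notin> triples (\<Xi> k)"
      using wf_system_edgeD(4)[OF wf backward(1)] full assms(2)
      unfolding at_level_def full_subsystem_def subsystem_def by blast
    then obtain t where "k \<in> I" "(t, a) \<in> D k"
      using assms(2) unfolding at_level_def by blast
    then have "k \<le> k'"
      using oriented_pair_le k' by blast
    moreover have "at_level b l"
      using l unfolding at_level_def by blast
    ultimately show ?thesis using k'(2) level_eq by (auto intro: order_trans)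
  qed
qed

lemma acyclic_merged: "acyclic (orient_rel X merged)"
proof (rule acyclic_if_level_mono[where A = "{v. \<exists>k. at_level v k}" and level = level])
  show "Range (orient_rel X merged) \<subseteq> {v. \<exists>k. at_level v k}"
  proof
    fix b assume "b \<in> Range (orient_rel X merged)"
    then obtain a where "(a, b) \<in> orient_rel X merged" by blast
    then consider (forward) j where "j \<in> I" "(a, b) \<in> D j" | (backward) "(b, a) \<in> edges X"
      unfolding orient_rel_def merged_def by blast
    then show "b \<in> {v. \<exists>k. at_level v k}"
    proof cases
      case forward
      then show ?thesis unfolding at_level_def by blast
    next
      case backward
      obtain k where "k \<in> I" "b \<in> triples (\<Xi> k)"
        using triple_in_patch[OF wf_system_edgeD(1)[OF wf backward]] .
      then show ?thesis unfolding at_level_def by blast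
    qed
  qed
next
  fix a b assume "(a, b) \<in> orient_rel X merged" "a \<in> {v. \<exists>k. at_level v k}"
  then show "level a \<le> level b"
    using merged_level_mono level_eq by blast
next
  fix a b assume edge: "(a, b) \<in> orient_rel X merged" and "a \<in> {v. \<exists>k. at_level v k}"
    and same: "level a = level b"
  then have a: "at_level a (level a)" using level_eq by blast
  then have "level a \<in> I" unfolding at_level_def by blast
  moreover have "at_level b (level a)"
    using merged_level_mono[OF edge a] same by simp
  ultimately have "(a, b) \<in> orient_rel (\<Xi> (level a)) (merged \<inter> edges (\<Xi> (level a)))"
    using orient_rel_full_subsystem[OF wf full edge _ _ merged_subset_edges] at_level_vertex a
    by blast
  with \<open>level a \<in> I\<close> show "(a, b) \<in> orient_rel (\<Xi> (level a)) (D (level a))"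
    by (simp add: merged_inter_edges)
next
  fix a assume "a \<in> {v. \<exists>k. at_level v k}"
  then have "level a \<in> I" using level_eq unfolding at_level_def by blast
  then show "acyclic (orient_rel (\<Xi> (level a)) (D (level a)))"
    using solution unfolding solution_def by blast
qed

lemma solution_merged: "solution X merged"
  unfolding solution_def
proof (intro conjI ballI allI impI)
  show "merged \<subseteq> edges X"
    by (rule merged_subset_edges)
next
  fix t assume "t \<in> triples X"
  then obtain k where k: "k \<in> I" "t \<in> triples (\<Xi> k)"
    using triple_in_patch by blast
  then have "\<exists>!p. (t, p) \<in> D k"
    using solution unfolding solution_def by blast
  moreover have "j = k" if "j \<in> I" "(t, p) \<in> D j" for j p
    using that k oriented_edgeD triples_disjoint by blast
  ultimately show "\<exists>!p. (t, p) \<in> merged"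
    unfolding merged_def using k by blast
next
  fix e assume "e \<in> merged"
  then obtain k where k: "k \<in> I" "e \<in> D k"
    unfolding merged_def by blast
  then have "e \<in> edges (\<Xi> k)" "simply_linked (\<Xi> k) e"
    using solution[OF k(1)] unfolding solution_def by blast+
  then show "simply_linked X e"
    by (rule patch_simply_linked[OF wf patch[OF k(1)]])
next
  fix p t1 t2 assume "(t1, p) \<in> merged" "(t2, p) \<in> merged"
  then obtain k l where k: "k \<in> I" "(t1, p) \<in> D k" and l: "l \<in> I" "(t2, p) \<in> D l"
    unfolding merged_def by blast
  then have "k = l" "p \<in> pairs (\<Xi> k)"
    using oriented_pair_unique oriented_edgeD(4) by blast+
  with k l show "t1 = t2"
    using solution[OF k(1)] unfolding solution_def by blast
next
  show "acyclic (orient_rel X merged)"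
    by (rule acyclic_merged)
qed

end

theorem proposition2p32:
  fixes X :: "'v system" and I :: "'i::order set"
    and \<Xi> :: "'i \<Rightarrow> 'v system" and D :: "'i \<Rightarrow> ('v \<times> 'v) set"
  assumes "wf_system X"
    and "patchwork_solution X I \<Xi> D"
  shows "solvable X"
proof -
  interpret patchwork_solved X I \<Xi> D
    using assms by unfold_locales
  show ?thesis
    using solution_merged unfolding solvable_def by blast
qed

end
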